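(* Let $N\ge 1$, let $1\ge x^{(1)}>x^{(2)}>\dots>x^{(N)}\ge 0$ and $y^{(1)},\dots,y^{(N)}\in\mathbb{R}$. For $a>0$ let $TNN_a$ be the triangularly-constructed network described in the context, and let $\delta(a)=1-\sigma(a)$. Then for every $k=1,\dots,N$, $$\big|TNN_a(x^{(k)})-y^{(k)}\big|\le (N+1)\,\delta(a)\,\max_{1\le j\le N}|y^{(j)}|.$$ Consequently, for every $\epsilon>0$ there exists $a>0$ such that $|TNN_a(x^{(k)})-y^{(k)}|\le\epsilon$ for all $k=1,\dots,N$ (in particular the average error $\frac1N\sum_k|TNN_a(x^{(k)})-y^{(k)}|\le\epsilon$).
   Context: Let $\sigma(t)=1/(1+e^{-t})$ be the sigmoid; note $\sigma(-a)=1-\sigma(a)$. Data: $1\ge x^{(1)}>x^{(2)}>\dots>x^{(N)}\ge0$ with labels $y^{(k)}\in\mathbb{R}$. Set $\Delta^{(k)}=x^{(k)}-x^{(k+1)}$ for $k=1,\dots,N-1$, and let $\Delta^{(N)}>0$ be an arbitrary fixed positive number (equivalently $\Delta^{(N)}=x^{(N)}-x^{(N+1)}$ for a dummy point $x^{(N+1)}<x^{(N)}$). Given $a>0$, define $W,b\in\mathbb{R}^N$ by $W_{N-k+1}=2a/\Delta^{(k)}$ and $b_{N-k+1}=a-W_{N-k+1}x^{(k)}$ for $k=1,\dots,N$. Define $\alpha\in\mathbb{R}^N$ by $\alpha_i=y^{(N-i+1)}-y^{(N-i+2)}$ for $i=1,\dots,N$, with the convention $y^{(N+1)}:=0$ (so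 that $y^{(k)}=\sum_{i=1}^{N-k+1}\alpha_i$). The triangularly-constructed neural network is $TNN_a(x)=\sum_{i=1}^N\alpha_i\,\sigma(W_ix+b_i)$ for $x\in\mathbb{R}$. *)

theory Defs
  imports "HOL-Analysis.Analysis"
begin

definition sigmoid :: "real \<Rightarrow> real" where
  "sigmoid t = 1 / (1 + exp (- t))"

text \<open>Data points x 1 > ... > x N and labels y 1, ..., y N are functions on nat,
  indexed 1..N.  dN is the arbitrary fixed positive number Delta^(N).\<close>

definition gap :: "nat \<Rightarrow> (nat \<Rightarrow> real) \<Rightarrow> real \<Rightarrow> nat \<Rightarrow> real" where
  "gap N x dN k = (if k < N then x k - x (k + 1) else dN)"

definition tnnW :: "nat \<Rightarrow> (nat \<Rightarrow> real) \<Rightarrow> real \<Rightarrow> real \<Rightarrow> nat \<Rightarrow> real" where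
  "tnnW N x dN a i = 2 * a / gap N x dN (N - i + 1)"

definition tnnb :: "nat \<Rightarrow> (nat \<Rightarrow> real) \<Rightarrow> real \<Rightarrow> real \<Rightarrow> nat \<Rightarrow> real" where
  "tnnb N x dN a i = a - tnnW N x dN a i * x (N - i + 1)"

definition tnnalpha :: "nat \<Rightarrow> (nat \<Rightarrow> real) \<Rightarrow> nat \<Rightarrow> real" where
  "tnnalpha N y i = y (N - i + 1) - (if i = 1 then 0 else y (N - i + 2))"

definition TNN :: "nat \<Rightarrow> (nat \<Rightarrow> real) \<Rightarrow> (nat \<Rightarrow> real) \<Rightarrow> real \<Rightarrow> real \<Rightarrow> real \<Rightarrow> real" where
  "TNN N x y dN a t = (\<Sum>i = 1..N. tnnalpha N y i * sigmoid (tnnW N x dN a i * t + tnnb N x dN a i))"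

end

theory Submission
  imports Defs
begin

text \<open>Extend the labels by Y(N+1) = 0 and put \<delta> = 1 - \<sigma>(a). Reindexed by data point,
  TNN(x_k) = \<Sum>_j (Y_j - Y_(j+1)) s_j, where the argument of the sigmoid s_j is at most -a for j < k
  and at least a for j \<ge> k (this is what the choice of W and b achieves), so s_j \<in> [0,\<delta>] before k
  and s_j \<in> [1-\<delta>,1] from k on. Subtracting the telescoping sum Y_k = \<Sum>_(j\<ge>k) (Y_j - Y_(j+1))
  leaves \<Sum>_j (Y_j - Y_(j+1)) t_j with weights t_j \<in> [0,\<delta>] before k and t_j \<in> [-\<delta>,0] from k on.
  Summation by parts rewrites this as \<Sum>_j Y_j (t_j - t_(j-1)), and the total variation of t is at
  most (N+1)\<delta>: every step is at most \<delta> except the sign change at k, which is at most 2\<delta>.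
  Since \<delta> \<rightarrow> 0 as a \<rightarrow> \<infinity>, the error can be made arbitrarily small.\<close>

lemma sigmoid_pos: "sigmoid t > 0"
  unfolding sigmoid_def by (simp add: add_pos_pos)

lemma sigmoid_less_1: "sigmoid t < 1"
  unfolding sigmoid_def by (simp add: add_pos_pos)

lemma sigmoid_minus: "sigmoid (- t) = 1 - sigmoid t"
proof -
  have "1 + exp t \<noteq> 0"
    using exp_gt_zero[of t] by linarith
  then show ?thesis
    unfolding sigmoid_def by (simp add: exp_minus field_simps)
qed

lemma sigmoid_mono: "s \<le> t \<Longrightarrow> sigmoid s \<le> sigmoid t"
  unfolding sigmoid_def by (simp add: frac_le add_pos_pos)

lemma tendsto_one_minus_sigmoid_at_top: "((\<lambda>a. 1 - sigmoid a) \<longlongrightarrow> 0) at_top"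
proof -
  have "filterlim (\<lambda>a::real. 1 + exp a) at_top at_top"
    by (rule filterlim_tendsto_add_at_top[OF tendsto_const exp_at_top])
  then have "((\<lambda>a. inverse (1 + exp a)) \<longlongrightarrow> (0::real)) at_top"
    by (rule tendsto_inverse_0_at_top)
  moreover have "1 - sigmoid a = inverse (1 + exp a)" for a
    using sigmoid_minus[of a] by (simp add: sigmoid_def divide_inverse)
  ultimately show ?thesis
    by simp
qed

lemma sum_diff_mult_by_parts:
  fixes Y t :: "nat \<Rightarrow> 'a::comm_ring"
  shows "(\<Sum>j=1..n. (Y j - Y (Suc j)) * t j)
           = (\<Sum>j=1..n. Y j * (t j - t (j - 1))) + Y 1 * t 0 - Y (Suc n) * t n"
  by (induction n) (simp_all add: algebra_simps)

lemma sum_diff_mult_sign_change_bound: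
  fixes Y t :: "nat \<Rightarrow> real"
  assumes k: "k \<in> {1..n}" and Y_last: "Y (Suc n) = 0"
    and Y_bound: "\<And>j. j \<in> {1..n} \<Longrightarrow> \<bar>Y j\<bar> \<le> M"
    and t0: "t 0 = 0"
    and t_before: "\<And>j. j < k \<Longrightarrow> t j \<in> {0..\<delta>}"
    and t_after: "\<And>j. j \<in> {k..n} \<Longrightarrow> t j \<in> {-\<delta>..0}"
  shows "\<bar>\<Sum>j=1..n. (Y j - Y (Suc j)) * t j\<bar> \<le> (real n + 1) * \<delta> * M"
proof -
  have jump: "\<bar>t j - t (j - 1)\<bar> \<le> \<delta> + (if j = k then \<delta> else 0)" if "j \<in> {1..n}" for j
  proof -
    consider "j < k" | "j = k" | "k < j" by linarith
    then show ?thesis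
    proof cases
      case 1
      have "t j \<in> {0..\<delta>}" "t (j - 1) \<in> {0..\<delta>}"
        using 1 t_before[of j] t_before[of "j - 1"] by auto
      then show ?thesis using 1 by (auto simp: abs_le_iff)
    next
      case 2
      have "t j \<in> {-\<delta>..0}" "t (j - 1) \<in> {0..\<delta>}"
        using 2 k t_after[of j] t_before[of "j - 1"] by auto
      then show ?thesis using 2 by (auto simp: abs_le_iff)
    next
      case 3
      have "t j \<in> {-\<delta>..0}" "t (j - 1) \<in> {-\<delta>..0}"
        using 3 that by (intro t_after; auto)+
      then show ?thesis using 3 by (auto simp: abs_le_iff)
    qed
  qed
  have "\<bar>\<Sum>j=1..n. (Y j - Y (Suc j)) * t j\<bar> = \<bar>\<Sum>j=1..n. Y j * (t j - t (j - 1))\<bar>"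
    using sum_diff_mult_by_parts[of Y t n] t0 Y_last by simp
  also have "\<dots> \<le> (\<Sum>j=1..n. \<bar>Y j * (t j - t (j - 1))\<bar>)"
    by (rule sum_abs)
  also have "\<dots> \<le> (\<Sum>j=1..n. M * (\<delta> + (if j = k then \<delta> else 0)))"
  proof (rule sum_mono)
    fix j assume "j \<in> {1..n}"
    moreover have "0 \<le> M"
      using Y_bound[of k] k by linarith
    ultimately show "\<bar>Y j * (t j - t (j - 1))\<bar> \<le> M * (\<delta> + (if j = k then \<delta> else 0))"
      unfolding abs_mult using Y_bound jump by (intro mult_mono) auto
  qed
  also have "\<dots> = (real n + 1) * \<delta> * M"
    using k by (simp add: sum.distrib flip: sum_distrib_left) (simp add: algebra_simps)
  finally show ?thesis .
qed

lemma sum_diff_mult_step_weights_bound: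
  fixes Y s :: "nat \<Rightarrow> real"
  assumes k: "k \<in> {1..n}" and Y_last: "Y (Suc n) = 0"
    and Y_bound: "\<And>j. j \<in> {1..n} \<Longrightarrow> \<bar>Y j\<bar> \<le> M"
    and \<delta>: "0 \<le> \<delta>"
    and s_before: "\<And>j. j \<in> {1..<k} \<Longrightarrow> s j \<in> {0..\<delta>}"
    and s_after: "\<And>j. j \<in> {k..n} \<Longrightarrow> s j \<in> {1-\<delta>..1}"
  shows "\<bar>(\<Sum>j=1..n. (Y j - Y (Suc j)) * s j) - Y k\<bar> \<le> (real n + 1) * \<delta> * M"
proof -
  define d where "d j = Y j - Y (Suc j)" for j
  define t where "t j = (if j = 0 then 0 else s j - (if k \<le> j then 1 else 0))" for j
  have "(\<Sum>j=k..<Suc n. Y (Suc j) - Y j) = Y (Suc n) - Y k"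
    using k by (intro sum_Suc_diff') auto
  then have telescope: "(\<Sum>j=k..n. d j) = Y k"
    by (simp add: d_def sum_subtractf atLeastLessThanSuc_atLeastAtMost Y_last)
  have "{j \<in> {1..n}. k \<le> j} = {k..n}"
    using k by auto
  then have "Y k = (\<Sum>j=1..n. if k \<le> j then d j else 0)"
    using sum.inter_filter[of "{1..n}" d "\<lambda>j. k \<le> j"] telescope by simp
  then have "(\<Sum>j=1..n. d j * s j) - Y k = (\<Sum>j=1..n. d j * t j)"
    by (simp only: sum_subtractf[symmetric]) (rule sum.cong, auto simp: t_def algebra_simps)
  moreover have "\<bar>\<Sum>j=1..n. d j * t j\<bar> \<le> (real n + 1) * \<delta> * M"
    unfolding d_def
  proof (rule sum_diff_mult_sign_change_bound[of k n Y M t, OF k Y_last Y_bound])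
    show "t 0 = 0"
      by (simp add: t_def)
    show "t j \<in> {0..\<delta>}" if "j < k" for j
      using that s_before[of j] \<delta> by (simp add: t_def)
    show "t j \<in> {-\<delta>..0}" if "j \<in> {k..n}" for j
      using that s_after[of j] k by (simp add: t_def)
  qed
  ultimately show ?thesis
    by (simp add: d_def)
qed

lemma TNN_eq_sum_over_points:
  "TNN N x y dN a t =
     (\<Sum>j=1..N. (y j - (if j = N then 0 else y (Suc j))) * sigmoid (a + 2 * a * (t - x j) / gap N x dN j))"
  unfolding TNN_def
proof (rule sum.reindex_bij_witness[of _ "\<lambda>j. N + 1 - j" "\<lambda>i. N + 1 - i"])
  fix i assume i: "i \<in> {1..N}"
  have "N - i + 1 = N + 1 - i" "N - i + 2 = Suc (N + 1 - i)" "N + 1 - i = N \<longleftrightarrow> i = 1"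
    using i by auto
  then show "(y (N + 1 - i) - (if N + 1 - i = N then 0 else y (Suc (N + 1 - i))))
        * sigmoid (a + 2 * a * (t - x (N + 1 - i)) / gap N x dN (N + 1 - i))
      = tnnalpha N y i * sigmoid (tnnW N x dN a i * t + tnnb N x dN a i)"
    by (simp add: tnnalpha_def tnnW_def tnnb_def algebra_simps add_divide_distrib diff_divide_distrib)
qed auto

lemma decreasing_points_antimono:
  fixes x :: "nat \<Rightarrow> 'a::order"
  assumes x_dec: "\<And>k. 1 \<le> k \<Longrightarrow> k < N \<Longrightarrow> x k > x (k + 1)"
    and "1 \<le> i" "i \<le> j" "j \<le> N"
  shows "x j \<le> x i"
  using assms(3,2,4)
proof (induction j rule: dec_induct)
  case (step j)
  then show ?case using x_dec[of j] by (auto intro: order.trans)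
qed simp

lemma TNN_error_bound:
  assumes x_dec: "\<And>k. 1 \<le> k \<Longrightarrow> k < N \<Longrightarrow> x k > x (k + 1)"
    and dN: "dN > 0" and a: "a > 0" and k: "k \<in> {1..N}"
  shows "\<bar>TNN N x y dN a (x k) - y k\<bar> \<le> (real N + 1) * (1 - sigmoid a) * (MAX j\<in>{1..N}. \<bar>y j\<bar>)"
proof -
  define Y where "Y j = (if j \<le> N then y j else 0)" for j
  define s where "s j = sigmoid (a + 2 * a * (x k - x j) / gap N x dN j)" for j
  have gap_pos: "gap N x dN j > 0" if "j \<in> {1..N}" for j
    using that x_dec[of j] dN by (auto simp: gap_def)
  have s_before: "s j \<in> {0..1 - sigmoid a}" if j: "j \<in> {1..<k}" for j
  proof -
    have "x k \<le> x (j + 1)"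
      using j k by (intro decreasing_points_antimono[of N x, OF x_dec]) auto
    then have "x k - x j \<le> - gap N x dN j"
      using j k by (simp add: gap_def)
    then have "a * (x k - x j) \<le> a * - gap N x dN j"
      using a by (intro mult_left_mono) auto
    then have "2 * a * (x k - x j) / gap N x dN j \<le> - 2 * a"
      using gap_pos[of j] j k by (simp add: divide_le_eq)
    then have "s j \<le> sigmoid (- a)"
      unfolding s_def by (intro sigmoid_mono) simp
    then show ?thesis
      using sigmoid_pos[of "a + 2 * a * (x k - x j) / gap N x dN j"] by (simp add: s_def sigmoid_minus)
  qed
  have s_after: "s j \<in> {1 - (1 - sigmoid a)..1}" if j: "j \<in> {k..N}" for j
  proof -
    have "x j \<le> x k"
      using j k by (intro decreasing_points_antimono[of N x, OF x_dec]) auto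
    then have "0 \<le> 2 * a * (x k - x j) / gap N x dN j"
      using a gap_pos[of j] j k by simp
    then have "sigmoid a \<le> s j"
      unfolding s_def by (intro sigmoid_mono) simp
    then show ?thesis
      using sigmoid_less_1 by (simp add: s_def less_imp_le)
  qed
  have "TNN N x y dN a (x k) = (\<Sum>j=1..N. (Y j - Y (Suc j)) * s j)"
    unfolding TNN_eq_sum_over_points s_def Y_def by (rule sum.cong) auto
  moreover have "\<bar>(\<Sum>j=1..N. (Y j - Y (Suc j)) * s j) - Y k\<bar>
      \<le> (real N + 1) * (1 - sigmoid a) * (MAX j\<in>{1..N}. \<bar>y j\<bar>)"
    using k s_before s_after sigmoid_less_1[of a]
    by (intro sum_diff_mult_step_weights_bound) (auto simp: Y_def intro: Max_ge)
  ultimately show ?thesis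
    using k by (simp add: Y_def)
qed

theorem theorem1:
  fixes N :: nat and x y :: "nat \<Rightarrow> real" and dN :: real
  assumes N: "N \<ge> 1"
    and x_le1: "x 1 \<le> 1"
    and x_ge0: "x N \<ge> 0"
    and x_dec: "\<And>k. 1 \<le> k \<Longrightarrow> k < N \<Longrightarrow> x k > x (k + 1)"
    and dN: "dN > 0"
  shows "(\<forall>a>0. \<forall>k\<in>{1..N}.
            \<bar>TNN N x y dN a (x k) - y k\<bar>
              \<le> (real N + 1) * (1 - sigmoid a) * (MAX j\<in>{1..N}. \<bar>y j\<bar>))
       \<and> (\<forall>\<epsilon>>0. \<exists>a>0. (\<forall>k\<in>{1..N}. \<bar>TNN N x y dN a (x k) - y k\<bar> \<le> \<epsilon>)
             \<and> (\<Sum>k=1..N. \<bar>TNN N x y dN a (x k) - y k\<bar>) / real N \<le> \<epsilon>)"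
proof (intro conjI allI impI ballI)
  fix \<epsilon> :: real assume \<epsilon>: "\<epsilon> > 0"
  define bound where "bound a = (real N + 1) * (1 - sigmoid a) * (MAX j\<in>{1..N}. \<bar>y j\<bar>)" for a
  have "(bound \<longlongrightarrow> 0) at_top"
    unfolding bound_def
    by (intro tendsto_mult_left_zero tendsto_mult_right_zero tendsto_one_minus_sigmoid_at_top)
  then have "eventually (\<lambda>a. a > 0 \<and> bound a < \<epsilon>) at_top"
    using \<epsilon> by (intro eventually_conj eventually_gt_at_top order_tendstoD(2))
  then obtain a where a: "a > 0" "bound a < \<epsilon>"
    using eventually_happens by force
  then have pointwise: "\<forall>k\<in>{1..N}. \<bar>TNN N x y dN a (x k) - y k\<bar> \<le> \<epsilon>"
    using TNN_error_bound[of N x, OF x_dec dN] unfolding bound_def by (fastforce intro: order.trans)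
  then have "(\<Sum>k=1..N. \<bar>TNN N x y dN a (x k) - y k\<bar>) \<le> real N * \<epsilon>"
    using sum_bounded_above[of "{1..N}" _ \<epsilon>] by simp
  with pointwise a N show "\<exists>a>0. (\<forall>k\<in>{1..N}. \<bar>TNN N x y dN a (x k) - y k\<bar> \<le> \<epsilon>)
      \<and> (\<Sum>k=1..N. \<bar>TNN N x y dN a (x k) - y k\<bar>) / real N \<le> \<epsilon>"
    by (auto simp: divide_le_eq mult.commute)
qed (use TNN_error_bound[of N x, OF x_dec dN] in auto)

end
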